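(* Let $\mathsf{X}\subset\mathbb{R}^d$ be compact, contained in the ball of radius $R$ centered at the origin, and let $\alpha,\beta\in\mathcal{M}_+(\mathsf{X})$. Then $\mathrm{SUOT}(\alpha,\beta)\le\mathrm{USOT}(\alpha,\beta)$.
   Context: Fix entropy functions $\varphi_1,\varphi_2$ (convex, l.s.c., domain in $[0,\infty)$, $\varphi(1)=0$) and a cost $\mathrm{C}_1$ on $\mathbb{R}\times\mathbb{R}$. $\mathrm{D}_\varphi(\mu|\nu)=\int\varphi(\frac{d\mu}{d\nu})d\nu+\varphi'_\infty\mu^\perp(\mathbb{R}^s)$, $\varphi'_\infty=\lim\varphi(x)/x$. $\mathrm{UOT}(\mu,\nu)=\inf_{\pi\ge0}\int\mathrm{C}_1d\pi+\mathrm{D}_{\varphi_1}(\pi_1|\mu)+\mathrm{D}_{\varphi_2}(\pi_2|\nu)$ for measures on $\mathbb{R}$ ($\pi_1,\pi_2$ marginals), $\mathrm{OT}$ the balanced version. With $\boldsymbol\sigma$ uniform on $\mathbb{S}^{d-1}$, $\theta^\star(x)=\langle\theta,x\rangle$: $\mathrm{SOT}(\alpha,\beta)=\int\mathrm{OT}(\theta^\star_\sharp\alpha,\theta^\star_\sharp\beta)d\boldsymbol\sigma$, $\mathrm{SUOT}(\alpha,\beta)=\int\mathrm{UOT}(\theta^\star_\sharp\alpha,\theta^\star_\sharp\beta)d\boldsymbol\sigma$, $\mathrm{USOT}(\alpha,\beta)=\inf_{\pi_1,\pi_2\in\mathcal{M}_+(\mathbb{R}^d)}\mathrm{SOT}(\pi_1,\pi_2)+\mathrm{D}_{\varphi_1}(\pi_1|\alpha)+\mathrm{D}_{\varphi_2}(\pi_2|\beta)$.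 *)

theory Defs
  imports "HOL-Analysis.Analysis"
begin

text \<open>Entropy functions: convex, lower semicontinuous on the domain [0,\<infinity>),
  values in [0,\<infinity>], normalised by phi 1 = 0. Only the values on [0,\<infinity>) matter
  (the domain of phi lies in [0,\<infinity>)).\<close>
definition entropy_function :: "(real \<Rightarrow> ennreal) \<Rightarrow> bool" where
  "entropy_function \<phi> \<longleftrightarrow>
     (\<forall>x y t. 0 \<le> x \<longrightarrow> 0 \<le> y \<longrightarrow> 0 \<le> t \<longrightarrow> t \<le> 1 \<longrightarrow>
        \<phi> (t * x + (1 - t) * y) \<le> ennreal t * \<phi> x + ennreal (1 - t) * \<phi> y) \<and>
     (\<forall>c. closed {x. 0 \<le> x \<and> \<phi> x \<le> c}) \<and>
     \<phi> 1 = 0"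

definition phi_inf :: "(real \<Rightarrow> ennreal) \<Rightarrow> ennreal" where
  "phi_inf \<phi> = Liminf at_top (\<lambda>x. \<phi> x / ennreal x)"

text \<open>Csiszar divergence D_phi(mu|nu) = \<integral> phi(d mu/d nu) d nu + phi'_infinity mu^perp(total),
  using the Lebesgue decomposition mu = f nu + mu restricted to a nu-null set S.
  (The value does not depend on the chosen decomposition.)\<close>
definition divergence :: "(real \<Rightarrow> ennreal) \<Rightarrow> 'b measure \<Rightarrow> 'b measure \<Rightarrow> ennreal" where
  "divergence \<phi> \<mu> \<nu> = Inf {(\<integral>\<^sup>+ x. \<phi> (f x) \<partial>\<nu>) + phi_inf \<phi> * emeasure \<mu> S | f S.
      f \<in> borel_measurable \<nu> \<and> (\<forall>x. 0 \<le> f x) \<and> S \<in> sets \<nu> \<and> emeasure \<nu> S = 0 \<and>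
      (\<forall>A \<in> sets \<mu>. emeasure \<mu> (A - S) = (\<integral>\<^sup>+ x\<in>A. ennreal (f x) \<partial>\<nu>))}"

definition finite_borel_measures :: "'a::topological_space measure set" where
  "finite_borel_measures = {M. sets M = sets borel \<and> emeasure M (space M) < \<infinity>}"

definition OT :: "(real \<times> real \<Rightarrow> ennreal) \<Rightarrow> real measure \<Rightarrow> real measure \<Rightarrow> ennreal" where
  "OT C \<mu> \<nu> = Inf {(\<integral>\<^sup>+ z. C z \<partial>\<pi>) | \<pi>. \<pi> \<in> finite_borel_measures \<and>
      distr \<pi> borel fst = \<mu> \<and> distr \<pi> borel snd = \<nu>}"

definition UOT :: "(real \<times> real \<Rightarrow> ennreal) \<Rightarrow> (real \<Rightarrow> ennreal) \<Rightarrow> (real \<Rightarrow> ennreal)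
    \<Rightarrow> real measure \<Rightarrow> real measure \<Rightarrow> ennreal" where
  "UOT C \<phi>1 \<phi>2 \<mu> \<nu> = Inf {(\<integral>\<^sup>+ z. C z \<partial>\<pi>) + divergence \<phi>1 (distr \<pi> borel fst) \<mu>
      + divergence \<phi>2 (distr \<pi> borel snd) \<nu> | \<pi>. \<pi> \<in> finite_borel_measures}"

text \<open>Uniform probability measure on the unit sphere S^{d-1}: image of the normalised
  Lebesgue measure on the unit ball under radial projection (equivalently, normalised
  surface measure).\<close>
definition unif_sphere :: "'a::euclidean_space measure" where
  "unif_sphere = distr (uniform_measure lborel (ball 0 1)) borel (\<lambda>x. x /\<^sub>R norm x)"

definition proj :: "'a::euclidean_space \<Rightarrow> 'a measure \<Rightarrow> real measure" where
  "proj \<theta> \<mu> = distr \<mu> borel (\<lambda>x. \<theta> \<bullet> x)"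

definition SOT :: "(real \<times> real \<Rightarrow> ennreal) \<Rightarrow> 'a::euclidean_space measure \<Rightarrow> 'a measure \<Rightarrow> ennreal" where
  "SOT C \<alpha> \<beta> = (\<integral>\<^sup>+ \<theta>. OT C (proj \<theta> \<alpha>) (proj \<theta> \<beta>) \<partial>unif_sphere)"

definition SUOT :: "(real \<times> real \<Rightarrow> ennreal) \<Rightarrow> (real \<Rightarrow> ennreal) \<Rightarrow> (real \<Rightarrow> ennreal)
    \<Rightarrow> 'a::euclidean_space measure \<Rightarrow> 'a measure \<Rightarrow> ennreal" where
  "SUOT C \<phi>1 \<phi>2 \<alpha> \<beta> = (\<integral>\<^sup>+ \<theta>. UOT C \<phi>1 \<phi>2 (proj \<theta> \<alpha>) (proj \<theta> \<beta>) \<partial>unif_sphere)"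

definition USOT :: "(real \<times> real \<Rightarrow> ennreal) \<Rightarrow> (real \<Rightarrow> ennreal) \<Rightarrow> (real \<Rightarrow> ennreal)
    \<Rightarrow> 'a::euclidean_space measure \<Rightarrow> 'a measure \<Rightarrow> ennreal" where
  "USOT C \<phi>1 \<phi>2 \<alpha> \<beta> = Inf {SOT C \<pi>1 \<pi>2 + divergence \<phi>1 \<pi>1 \<alpha> + divergence \<phi>2 \<pi>2 \<beta> | \<pi>1 \<pi>2.
      \<pi>1 \<in> finite_borel_measures \<and> \<pi>2 \<in> finite_borel_measures}"

end

theory Submission
  imports Defs
begin

(* Every coupling of the projections of pi1 and pi2 is
   admissible in the unbalanced problem between the projections of alpha and beta, so
   UOT(theta#alpha, theta#beta) <= OT(theta#pi1, theta#pi2) + D(theta#pi1|theta#alpha)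
   + D(theta#pi2|theta#beta). The divergences do not increase under the projection (data
   processing), and the uniform measure on the sphere has mass at most one, so integrating over
   theta gives SUOT(alpha, beta) <= SOT(pi1, pi2) + D(pi1|alpha) + D(pi2|beta).

   Data processing is a conditional Jensen inequality: a lower semicontinuous convex phi is the
   supremum of its countably many rational affine minorants a t + b, and for each of them the
   measure phi(f) nu + phi'_infinity mu^perp dominates a mu + b nu; this domination survives the
   push-forward and, compared density by density, yields phi(g) <= (density of the image of the
   right-hand side) almost everywhere for the density g of the image of mu. *)

lemma entropy_functionD:
  assumes "entropy_function \<phi>"
  shows entropy_function_convex: "\<lbrakk>0 \<le> x; 0 \<le> y; 0 \<le> t; t \<le> 1\<rbrakk> \<Longrightarrow>
           \<phi> (t * x + (1 - t) * y) \<le> ennreal t * \<phi> x + ennreal (1 - t) * \<phi> y"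
    and entropy_function_closed_sublevel: "closed {x. 0 \<le> x \<and> \<phi> x \<le> c}"
    and entropy_function_one: "\<phi> 1 = 0"
  using assms unfolding entropy_function_def by blast+

lemma borel_measurable_entropy_comp:
  assumes "entropy_function \<phi>" "f \<in> borel_measurable M" "\<And>x. 0 \<le> f x"
  shows "(\<lambda>x. \<phi> (f x)) \<in> borel_measurable M"
proof (rule borel_measurableI_le)
  fix c
  have "{x\<in>space M. \<phi> (f x) \<le> c} = f -` {t. 0 \<le> t \<and> \<phi> t \<le> c} \<inter> space M"
    using assms(3) by auto
  also have "\<dots> \<in> sets M"
    by (rule measurable_sets[OF assms(2)])
      (simp add: borel_closed entropy_function_closed_sublevel[OF assms(1)])
  finally show "{x\<in>space M. \<phi> (f x) \<le> c} \<in> sets M" .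
qed

definition entropy_epigraph :: "(real \<Rightarrow> ennreal) \<Rightarrow> (real \<times> real) set" where
  "entropy_epigraph \<phi> = {(t, s). 0 \<le> t \<and> 0 \<le> s \<and> \<phi> t \<le> ennreal s}"

lemma convex_entropy_epigraph:
  assumes "entropy_function \<phi>"
  shows "convex (entropy_epigraph \<phi>)"
proof (rule convexI)
  fix p q :: "real \<times> real" and u v :: real
  assume "p \<in> entropy_epigraph \<phi>" "q \<in> entropy_epigraph \<phi>" "0 \<le> u" "0 \<le> v" "u + v = 1"
  moreover obtain t1 s1 t2 s2 where "p = (t1, s1)" "q = (t2, s2)" by fastforce
  ultimately have h: "0 \<le> t1" "0 \<le> s1" "\<phi> t1 \<le> ennreal s1" "0 \<le> t2" "0 \<le> s2" "\<phi> t2 \<le> ennreal s2"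
    and uv: "0 \<le> u" "0 \<le> v" "v = 1 - u" and pq: "p = (t1, s1)" "q = (t2, s2)"
    by (auto simp: entropy_epigraph_def)
  have "\<phi> (u * t1 + v * t2) \<le> ennreal u * \<phi> t1 + ennreal v * \<phi> t2"
    using entropy_function_convex[OF assms, of t1 t2 u] h uv by simp
  also have "\<dots> \<le> ennreal u * ennreal s1 + ennreal v * ennreal s2"
    using h by (intro add_mono mult_left_mono) auto
  also have "\<dots> = ennreal (u * s1 + v * s2)"
    using h uv by (simp add: ennreal_plus ennreal_mult)
  finally show "u *\<^sub>R p + v *\<^sub>R q \<in> entropy_epigraph \<phi>"
    using h uv pq by (simp add: entropy_epigraph_def)
qed

lemma closed_entropy_epigraph:
  assumes "entropy_function \<phi>"
  shows "closed (entropy_epigraph \<phi>)"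
proof -
  have eq: "entropy_epigraph \<phi> = {p. 0 \<le> fst p} \<inter> {p. 0 \<le> snd p} \<inter>
      (\<Inter>c. {p. c \<le> snd p} \<union> ({t. 0 \<le> t \<and> \<phi> t \<le> ennreal c} \<times> UNIV))"
  proof (intro set_eqI iffI)
    fix p :: "real \<times> real"
    assume "p \<in> entropy_epigraph \<phi>"
    moreover have "\<phi> t \<le> ennreal c" if "\<phi> t \<le> ennreal s" "\<not> c \<le> s" for t s c
      using that by (meson ennreal_leI nle_le order_trans)
    ultimately show "p \<in> {p. 0 \<le> fst p} \<inter> {p. 0 \<le> snd p} \<inter>
      (\<Inter>c. {p. c \<le> snd p} \<union> ({t. 0 \<le> t \<and> \<phi> t \<le> ennreal c} \<times> UNIV))"
      by (auto simp: entropy_epigraph_def)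
  next
    fix p :: "real \<times> real"
    assume p: "p \<in> {p. 0 \<le> fst p} \<inter> {p. 0 \<le> snd p} \<inter>
      (\<Inter>c. {p. c \<le> snd p} \<union> ({t. 0 \<le> t \<and> \<phi> t \<le> ennreal c} \<times> UNIV))"
    obtain t s where ts: "p = (t, s)" by fastforce
    have "\<phi> t \<le> ennreal s"
    proof (rule ccontr)
      assume "\<not> \<phi> t \<le> ennreal s"
      then have "ennreal s < \<phi> t" by simp
      then obtain z where z: "ennreal s < z" "z < \<phi> t"
        using dense by blast
      then obtain c where c: "z = ennreal c" "0 \<le> c"
        by (cases z rule: ennreal_cases) auto
      then have "s < c" using z(1) p ts by (simp add: ennreal_less_iff)
      then have "\<phi> t \<le> ennreal c" using p ts by (auto simp: not_le[symmetric])
      then show False using z c by simp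
    qed
    then show "p \<in> entropy_epigraph \<phi>" using p ts by (simp add: entropy_epigraph_def)
  qed
  have "closed {p::real \<times> real. c \<le> snd p}" "closed {p::real \<times> real. c \<le> fst p}" for c
    by (intro closed_Collect_le continuous_intros)+
  then show ?thesis
    unfolding eq
    by (intro closed_Int closed_INT ballI closed_Un closed_Times closed_UNIV
        entropy_function_closed_sublevel[OF assms])
qed

definition affine_minorant :: "(real \<Rightarrow> ennreal) \<Rightarrow> real \<Rightarrow> real \<Rightarrow> bool" where
  "affine_minorant \<phi> a b \<longleftrightarrow> (\<forall>t\<ge>0. ennreal (a * t + b) \<le> \<phi> t)"

lemma affine_minorant_of_separation:
  assumes "0 < l" "l * a2 \<le> 1"
    and separation: "\<And>t. 0 \<le> t \<Longrightarrow> \<phi> t \<noteq> \<infinity> \<Longrightarrow> d < a1 * t + a2 * enn2real (\<phi> t)"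
  shows "affine_minorant \<phi> (- l * a1) (l * d)"
  unfolding affine_minorant_def
proof (intro allI impI)
  fix t :: real
  assume "0 \<le> t"
  show "ennreal (- l * a1 * t + l * d) \<le> \<phi> t"
  proof (cases "\<phi> t = \<infinity>")
    case False
    have "l * (d - a1 * t) \<le> l * (a2 * enn2real (\<phi> t))"
      using separation[OF \<open>0 \<le> t\<close> False] \<open>0 < l\<close> by simp
    also have "\<dots> \<le> enn2real (\<phi> t)"
      using \<open>l * a2 \<le> 1\<close> mult_right_mono[OF \<open>l * a2 \<le> 1\<close> enn2real_nonneg[of "\<phi> t"]]
      by (simp add: mult.assoc)
    finally have "ennreal (- l * a1 * t + l * d) \<le> ennreal (enn2real (\<phi> t))"
      by (intro ennreal_leI) (simp add: algebra_simps)
    then show ?thesis using False by (simp add: ennreal_enn2real_if)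
  qed simp
qed

text \<open>Separate the point (x0, c) from the closed convex epigraph by a line. If the line is
  vertical, phi is infinite on the side of x0 and any steep enough affine function works.\<close>
lemma exists_affine_minorant_above:
  assumes \<phi>: "entropy_function \<phi>" and "0 \<le> x0" "0 \<le> c" "ennreal c < \<phi> x0"
  obtains a b where "affine_minorant \<phi> a b" "c < a * x0 + b"
proof -
  have "(x0, c) \<notin> entropy_epigraph \<phi>"
    using assms by (simp add: entropy_epigraph_def)
  then obtain w d where wd: "inner w (x0, c) < d" "\<forall>p\<in>entropy_epigraph \<phi>. d < inner w p"
    using separating_hyperplane_closed_point convex_entropy_epigraph closed_entropy_epigraph \<phi>
    by metis
  obtain a1 a2 where w: "w = (a1, a2)" by fastforce
  have separation: "d < a1 * t + a2 * enn2real (\<phi> t)" if "0 \<le> t" "\<phi> t \<noteq> \<infinity>" for t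
    using wd(2)[rule_format, of "(t, enn2real (\<phi> t))"] that w
    by (simp add: entropy_epigraph_def ennreal_enn2real_if)
  have below: "a1 * x0 + a2 * c < d" using wd(1) w by simp
  have "0 \<le> a2"
  proof (rule ccontr)
    assume "\<not> 0 \<le> a2"
    define s where "s = (\<bar>a1\<bar> + \<bar>d\<bar>) / - a2"
    have "0 \<le> s" "a2 * s = - (\<bar>a1\<bar> + \<bar>d\<bar>)"
      using \<open>\<not> 0 \<le> a2\<close> by (auto simp: s_def divide_nonneg_neg)
    moreover have "d < a1 + a2 * s"
      using wd(2)[rule_format, of "(1, s)"] entropy_function_one[OF \<phi>] \<open>0 \<le> s\<close> w
      by (simp add: entropy_epigraph_def)
    ultimately show False by linarith
  qed
  define l where "l = (if a2 = 0 then (c + 1) / (d - a1 * x0) else 1 / a2)"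
  have "0 < l \<and> l * a2 \<le> 1 \<and> c < l * (d - a1 * x0)"
  proof (cases "a2 = 0")
    case True
    with below \<open>0 \<le> c\<close> show ?thesis by (simp add: l_def)
  next
    case False
    with \<open>0 \<le> a2\<close> have "0 < a2" by simp
    with below show ?thesis by (simp add: l_def field_simps)
  qed
  then show ?thesis
    using affine_minorant_of_separation[of l a2 \<phi> d a1] separation
    by (intro that[of "- l * a1" "l * d"]) (auto simp: algebra_simps)
qed

lemma exists_rat_affine_minorant_close:
  assumes ab: "affine_minorant \<phi> a b" and "0 \<le> x" "0 < \<epsilon>"
  obtains q1 q2 :: rat
  where "affine_minorant \<phi> (of_rat q1) (of_rat q2)" "a * x + b - \<epsilon> < of_rat q1 * x + of_rat q2"
proof -
  obtain r1 where "r1 \<in> \<rat>" "a - \<epsilon> / (2 * (x + 1)) < r1" "r1 < a"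
    using Rats_dense_in_real[of "a - \<epsilon> / (2 * (x + 1))" a] assms(2,3) by auto
  moreover obtain r2 where "r2 \<in> \<rat>" "b - \<epsilon> / 2 < r2" "r2 < b"
    using Rats_dense_in_real[of "b - \<epsilon> / 2" b] assms(3) by auto
  ultimately obtain q1 q2 where q: "r1 = of_rat q1" "r2 = of_rat q2"
    unfolding Rats_def by blast
  have minorant: "affine_minorant \<phi> r1 r2"
    unfolding affine_minorant_def
  proof (intro allI impI)
    fix t :: real
    assume "0 \<le> t"
    then have "ennreal (r1 * t + r2) \<le> ennreal (a * t + b)"
      using \<open>r1 < a\<close> \<open>r2 < b\<close> by (intro ennreal_leI add_mono mult_right_mono) auto
    also have "\<dots> \<le> \<phi> t" using ab \<open>0 \<le> t\<close> by (simp add: affine_minorant_def)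
    finally show "ennreal (r1 * t + r2) \<le> \<phi> t" .
  qed
  have "(a - r1) * x \<le> \<epsilon> / (2 * (x + 1)) * x"
    using \<open>a - \<epsilon> / (2 * (x + 1)) < r1\<close> \<open>0 \<le> x\<close> by (intro mult_right_mono) auto
  also have "\<dots> \<le> \<epsilon> / 2"
    using assms(2,3) by (simp add: field_simps)
  finally have "a * x + b - \<epsilon> < r1 * x + r2"
    using \<open>b - \<epsilon> / 2 < r2\<close> by (simp add: field_simps)
  then show ?thesis using minorant q by (intro that) auto
qed

lemma entropy_le_of_rat_affine_minorants:
  assumes \<phi>: "entropy_function \<phi>" and "0 \<le> x"
    and below: "\<And>q1 q2. affine_minorant \<phi> (of_rat q1) (of_rat q2) \<Longrightarrow>
                  ennreal (of_rat q1 * x + of_rat q2) \<le> z"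
  shows "\<phi> x \<le> z"
proof (rule ccontr)
  assume "\<not> \<phi> x \<le> z"
  then have "z < \<phi> x" by simp
  then obtain y where "z < y" "y < \<phi> x"
    using dense by blast
  then obtain c where c: "y = ennreal c" "0 \<le> c"
    by (cases y rule: ennreal_cases) auto
  obtain a b where ab: "affine_minorant \<phi> a b" "c < a * x + b"
    using exists_affine_minorant_above[OF \<phi> \<open>0 \<le> x\<close> c(2)] \<open>y < \<phi> x\<close> c(1) by blast
  then obtain q1 q2 where "affine_minorant \<phi> (of_rat q1) (of_rat q2)"
    and "c < of_rat q1 * x + of_rat q2"
    using exists_rat_affine_minorant_close[OF ab(1) \<open>0 \<le> x\<close>, of "a * x + b - c"] by auto
  then have "y < z"
    using below c by (metis ennreal_less_iff order.strict_trans2)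
  with \<open>z < y\<close> show False by simp
qed

lemma affine_minorant_slope_le_phi_inf:
  assumes "affine_minorant \<phi> a b"
  shows "ennreal a \<le> phi_inf \<phi>"
proof -
  have "((\<lambda>t::real. a + b / t) \<longlongrightarrow> a + 0) at_top"
    by (intro tendsto_add tendsto_const tendsto_divide_0[OF tendsto_const]
        filterlim_at_top_imp_at_infinity filterlim_ident)
  then have "((\<lambda>t. ennreal (a + b / t)) \<longlongrightarrow> ennreal a) at_top"
    by (intro tendsto_ennrealI) simp
  then have "ennreal a = Liminf at_top (\<lambda>t. ennreal (a + b / t))"
    by (simp add: lim_imp_Liminf)
  also have "\<dots> \<le> Liminf at_top (\<lambda>t. \<phi> t / ennreal t)"
  proof (intro Liminf_mono eventually_mono[OF eventually_gt_at_top[of 0]])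
    fix t :: real
    assume "0 < t"
    have "ennreal (a + b / t) = ennreal (a * t + b) / ennreal t"
    proof (cases "0 \<le> a * t + b")
      case True
      then show ?thesis using \<open>0 < t\<close> by (simp add: divide_ennreal field_simps)
    next
      case False
      then have "a + b / t < 0" using \<open>0 < t\<close> by (simp add: field_simps)
      then show ?thesis using False by (simp add: ennreal_neg)
    qed
    also have "\<dots> \<le> \<phi> t / ennreal t"
      using assms \<open>0 < t\<close> by (intro divide_right_mono_ennreal) (simp add: affine_minorant_def)
    finally show "ennreal (a + b / t) \<le> \<phi> t / ennreal t" .
  qed
  finally show ?thesis unfolding phi_inf_def .
qed

text \<open>Moving the negative parts of the coefficients to the other side turns an inequality
  for a real affine function into one between sums in ennreal, which can be integrated.\<close>
lemma ennreal_affine_le_iff: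
  fixes a b t :: real
  assumes "0 \<le> t"
  shows "ennreal (a * t + b) \<le> z \<longleftrightarrow>
         ennreal a * ennreal t + ennreal b \<le> z + (ennreal (- a) * ennreal t + ennreal (- b))"
proof -
  have parts: "ennreal c * ennreal t + ennreal d = ennreal (max c 0 * t + max d 0)" for c d :: real
  proof -
    have "ennreal c = ennreal (max c 0)" "ennreal d = ennreal (max d 0)"
      by (simp_all add: max_def ennreal_neg)
    then show ?thesis
      using assms by (simp add: ennreal_mult ennreal_plus)
  qed
  have "ennreal (a * t + b) = ennreal (max a 0 * t + max b 0) - ennreal (max (- a) 0 * t + max (- b) 0)"
    using assms by (subst ennreal_minus) (auto simp: max_def algebra_simps)
  then show ?thesis
    unfolding parts by (simp add: ennreal_minus_le_iff add.commute)
qed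

lemma AE_le_of_set_nn_integral_le:
  assumes [measurable]: "u \<in> borel_measurable M" "v \<in> borel_measurable M"
    and finite: "(\<integral>\<^sup>+x. u x \<partial>M) \<noteq> \<infinity>"
    and le: "\<And>B. B \<in> sets M \<Longrightarrow> (\<integral>\<^sup>+x\<in>B. u x \<partial>M) \<le> (\<integral>\<^sup>+x\<in>B. v x \<partial>M)"
  shows "AE x in M. u x \<le> v x"
proof -
  define B where "B = {x\<in>space M. v x < u x}"
  have [measurable]: "B \<in> sets M" unfolding B_def by measurable
  have split: "(\<integral>\<^sup>+x\<in>B. u x \<partial>M) = (\<integral>\<^sup>+x\<in>B. v x \<partial>M) + (\<integral>\<^sup>+x\<in>B. u x - v x \<partial>M)"
    by (subst nn_integral_add[symmetric])
       (auto intro!: nn_integral_cong simp: B_def add_diff_self_ennreal split: split_indicator)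
  have "(\<integral>\<^sup>+x\<in>B. v x \<partial>M) \<le> (\<integral>\<^sup>+x\<in>B. u x \<partial>M)"
    by (intro nn_integral_mono) (auto simp: B_def split: split_indicator)
  also have "\<dots> \<le> (\<integral>\<^sup>+x. u x \<partial>M)"
    by (intro nn_integral_mono) (simp split: split_indicator)
  finally have "(\<integral>\<^sup>+x\<in>B. v x \<partial>M) \<noteq> \<infinity>"
    using finite by (auto simp: top_unique)
  then have "(\<integral>\<^sup>+x\<in>B. u x - v x \<partial>M) = 0"
    using le[of B] split ennreal_add_left_cancel_le[of _ _ 0] by simp
  then have "AE x in M. (u x - v x) * indicator B x = 0"
    by (subst (asm) nn_integral_0_iff_AE) measurable
  then show ?thesis
    using AE_space by eventually_elim (auto simp: B_def diff_eq_0_iff_ennreal not_le indicator_def)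
qed

text \<open>A countable union of Q-null sets of almost maximal P-measure attains the supremum;
  maximality then forces P to vanish on every Q-null set outside it.\<close>
lemma exists_maximal_null_set:
  assumes "finite_measure P" "sets Q = sets P"
  obtains S where "S \<in> null_sets Q" "\<And>B. B \<in> null_sets Q \<Longrightarrow> emeasure P (B - S) = 0"
proof -
  obtain m :: "nat \<Rightarrow> ennreal" where m: "range m \<subseteq> emeasure P ` null_sets Q"
    "Sup (emeasure P ` null_sets Q) = Sup (range m)"
    using ennreal_SUP_countable_SUP[of "null_sets Q" "emeasure P"] by blast
  have "\<forall>n. \<exists>C. C \<in> null_sets Q \<and> m n = emeasure P C"
    using m(1) by blast
  then obtain C where C: "\<And>n. C n \<in> null_sets Q" "\<And>n. m n = emeasure P (C n)"
    by metis
  define S where "S = (\<Union>n. C n)"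
  have S: "S \<in> null_sets Q" using C by (auto simp: S_def)
  then have "S \<in> sets P" using assms(2) by (auto simp: null_sets_def)
  have S_max: "emeasure P B \<le> emeasure P S" if "B \<in> null_sets Q" for B
  proof -
    have "emeasure P B \<le> Sup (range m)"
      using that m(2) by (metis SUP_upper)
    also have "\<dots> \<le> emeasure P S"
      using C \<open>S \<in> sets P\<close> by (auto intro!: SUP_least emeasure_mono simp: S_def)
    finally show ?thesis .
  qed
  show ?thesis
  proof (rule that[OF S])
    fix B
    assume "B \<in> null_sets Q"
    then have "B \<in> sets P" using assms(2) by (auto simp: null_sets_def)
    have "emeasure P S + emeasure P (B - S) = emeasure P (S \<union> B)"
      using \<open>S \<in> sets P\<close> \<open>B \<in> sets P\<close> by (subst plus_emeasure) (auto simp: Un_Diff_cancel)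
    also have "\<dots> \<le> emeasure P S"
      using S \<open>B \<in> null_sets Q\<close> by (intro S_max) auto
    finally show "emeasure P (B - S) = 0"
      using finite_measure.emeasure_finite[OF assms(1)] ennreal_add_left_cancel_le[of _ _ 0]
      by simp
  qed
qed

definition lebesgue_decomposition :: "'a measure \<Rightarrow> 'a measure \<Rightarrow> ('a \<Rightarrow> real) \<Rightarrow> 'a set \<Rightarrow> bool" where
  "lebesgue_decomposition \<mu> \<nu> f S \<longleftrightarrow> f \<in> borel_measurable \<nu> \<and> (\<forall>x. 0 \<le> f x) \<and> S \<in> null_sets \<nu> \<and>
     (\<forall>A\<in>sets \<mu>. emeasure \<mu> (A - S) = (\<integral>\<^sup>+x\<in>A. ennreal (f x) \<partial>\<nu>))"

lemma divergence_le_decomposition: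
  "lebesgue_decomposition \<mu> \<nu> f S \<Longrightarrow>
     divergence \<phi> \<mu> \<nu> \<le> (\<integral>\<^sup>+x. \<phi> (f x) \<partial>\<nu>) + phi_inf \<phi> * emeasure \<mu> S"
  unfolding divergence_def lebesgue_decomposition_def by (intro Inf_lower) auto

lemma le_divergence:
  "(\<And>f S. lebesgue_decomposition \<mu> \<nu> f S \<Longrightarrow> c \<le> (\<integral>\<^sup>+x. \<phi> (f x) \<partial>\<nu>) + phi_inf \<phi> * emeasure \<mu> S)
     \<Longrightarrow> c \<le> divergence \<phi> \<mu> \<nu>"
  unfolding divergence_def lebesgue_decomposition_def by (intro Inf_greatest) auto

lemma (in sigma_finite_measure) set_nn_integral_RN_deriv:
  assumes "absolutely_continuous M N" "sets N = sets M" "A \<in> sets M"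
  shows "(\<integral>\<^sup>+x\<in>A. RN_deriv M N x \<partial>M) = emeasure N A"
  using emeasure_density[of "RN_deriv M N" M A] density_RN_deriv[OF assms(1,2)] assms(3) by simp

lemma finite_measure_Lebesgue_decomposition:
  assumes P: "finite_measure P" and Q: "finite_measure Q" and sets_eq: "sets P = sets Q"
  obtains g S where "lebesgue_decomposition P Q g S"
proof -
  interpret Q: finite_measure Q by (rule Q)
  obtain S where S: "S \<in> null_sets Q" and S_max: "\<And>B. B \<in> null_sets Q \<Longrightarrow> emeasure P (B - S) = 0"
    using exists_maximal_null_set[OF P sets_eq[symmetric]] by blast
  then have [measurable]: "S \<in> sets P" using sets_eq by auto
  define P' where "P' = density P (indicator (space P - S))"
  have P'_eq: "emeasure P' A = emeasure P (A - S)" if "A \<in> sets P" for A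
  proof -
    have "emeasure P' A = (\<integral>\<^sup>+x\<in>A. indicator (space P - S) x \<partial>P)"
      using that by (simp add: P'_def emeasure_density)
    also have "\<dots> = (\<integral>\<^sup>+x. indicator (A - S) x \<partial>P)"
      using sets.sets_into_space[OF that] by (intro nn_integral_cong) (auto split: split_indicator)
    finally show ?thesis using that by simp
  qed
  have "sets P' = sets Q" using sets_eq by (simp add: P'_def)
  moreover have "absolutely_continuous Q P'"
    using S_max sets_eq \<open>sets P' = sets Q\<close>
    by (auto simp: absolutely_continuous_def null_sets_def P'_eq)
  ultimately have G: "emeasure P' A = (\<integral>\<^sup>+y\<in>A. RN_deriv Q P' y \<partial>Q)" if "A \<in> sets Q" for A
    using Q.set_nn_integral_RN_deriv that by simp
  have "(\<integral>\<^sup>+y. RN_deriv Q P' y \<partial>Q) = (\<integral>\<^sup>+y\<in>space Q. RN_deriv Q P' y \<partial>Q)"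
    by (intro nn_integral_cong) simp
  also have "\<dots> = emeasure P (space P - S)"
    using G[of "space Q"] P'_eq[of "space P"] sets_eq_imp_space_eq[OF sets_eq] sets.top[of P] by simp
  finally have "(\<integral>\<^sup>+y. RN_deriv Q P' y \<partial>Q) \<noteq> \<infinity>"
    using finite_measure.emeasure_finite[OF P] by simp
  then have "AE y in Q. RN_deriv Q P' y \<noteq> \<infinity>"
    by (intro nn_integral_noteq_infinite) simp
  then have "AE y in Q. ennreal (enn2real (RN_deriv Q P' y)) = RN_deriv Q P' y"
    by eventually_elim (simp add: ennreal_enn2real_if)
  then have "emeasure P (A - S) = (\<integral>\<^sup>+y\<in>A. ennreal (enn2real (RN_deriv Q P' y)) \<partial>Q)"
    if "A \<in> sets P" for A
    using that sets_eq by (auto simp: P'_eq[symmetric] G intro!: nn_integral_cong_AE)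
  then show ?thesis
    using S by (intro that[of "\<lambda>y. enn2real (RN_deriv Q P' y)"]) (auto simp: lebesgue_decomposition_def)
qed

lemma set_nn_integral_RN_deriv_distr:
  assumes "finite_measure \<nu>" and T: "T \<in> measurable \<nu> N" and sets_eq: "sets M = sets \<nu>"
    and null: "\<And>B. B \<in> sets N \<Longrightarrow> emeasure \<nu> (T -` B \<inter> space \<nu>) = 0 \<Longrightarrow>
                    emeasure M (T -` B \<inter> space \<nu>) = 0"
    and B: "B \<in> sets N"
  shows "(\<integral>\<^sup>+y\<in>B. RN_deriv (distr \<nu> N T) (distr M N T) y \<partial>distr \<nu> N T)
       = emeasure M (T -` B \<inter> space \<nu>)"
proof -
  interpret Q: finite_measure "distr \<nu> N T"
    using assms by (intro finite_measure.finite_measure_distr)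
  have T_M: "T \<in> measurable M N" using T sets_eq by (simp cong: measurable_cong_sets)
  have push: "emeasure (distr M N T) C = emeasure M (T -` C \<inter> space \<nu>)" if "C \<in> sets N" for C
    using that sets_eq_imp_space_eq[OF sets_eq] by (simp add: emeasure_distr[OF T_M])
  have "absolutely_continuous (distr \<nu> N T) (distr M N T)"
    using null T by (auto simp: absolutely_continuous_def null_sets_def push emeasure_distr)
  then show ?thesis
    using Q.set_nn_integral_RN_deriv B by (simp add: push)
qed

lemma set_nn_integral_affine:
  assumes "f \<in> borel_measurable M" "A \<in> sets M"
  shows "(\<integral>\<^sup>+x\<in>A. c * f x + d \<partial>M) = c * (\<integral>\<^sup>+x\<in>A. f x \<partial>M) + d * emeasure M A"
proof -
  have "(\<integral>\<^sup>+x\<in>A. c * f x + d \<partial>M) = (\<integral>\<^sup>+x. c * (f x * indicator A x) + d * indicator A x \<partial>M)"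
    by (intro nn_integral_cong) (simp add: distrib_right mult.assoc)
  then show ?thesis
    using assms by (simp add: nn_integral_add nn_integral_cmult nn_integral_cmult_indicator)
qed

text \<open>Read: the measure phi(f) nu + phi'_infinity mu restricted to S dominates a mu + b nu.
  On the absolutely continuous part this is the pointwise inequality, on the singular part it is
  a \<le> phi'_infinity.\<close>
lemma affine_minorant_measure_le:
  assumes \<phi>: "entropy_function \<phi>" and ab: "affine_minorant \<phi> a b"
    and decomposition: "lebesgue_decomposition \<mu> \<nu> f S"
    and sets_eq: "sets \<mu> = sets \<nu>" and A: "A \<in> sets \<nu>"
  shows "ennreal a * emeasure \<mu> A + ennreal b * emeasure \<nu> A
       \<le> (\<integral>\<^sup>+x\<in>A. \<phi> (f x) \<partial>\<nu>) + phi_inf \<phi> * emeasure \<mu> (A \<inter> S)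
         + (ennreal (- a) * emeasure \<mu> A + ennreal (- b) * emeasure \<nu> A)"
proof -
  have f: "f \<in> borel_measurable \<nu>" "\<And>x. 0 \<le> f x" and S: "S \<in> sets \<nu>"
    and A_decomposition: "emeasure \<mu> (A - S) = (\<integral>\<^sup>+x\<in>A. ennreal (f x) \<partial>\<nu>)"
    using decomposition A sets_eq by (auto simp: lebesgue_decomposition_def)
  note [measurable] = f(1) borel_measurable_entropy_comp[OF \<phi> f] S A
  define X1 where "X1 = (\<integral>\<^sup>+x\<in>A. ennreal (f x) \<partial>\<nu>)"
  define X2 where "X2 = emeasure \<mu> (A \<inter> S)"
  have "emeasure \<mu> A = emeasure \<mu> (A - S) + emeasure \<mu> (A \<inter> S)"
    using A S sets_eq by (subst plus_emeasure) (auto intro!: arg_cong[where f = "emeasure \<mu>"])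
  then have \<mu>A: "emeasure \<mu> A = X1 + X2"
    by (simp add: A_decomposition X1_def X2_def)
  have "ennreal a * X1 + ennreal b * emeasure \<nu> A
      = (\<integral>\<^sup>+x\<in>A. ennreal a * ennreal (f x) + ennreal b \<partial>\<nu>)"
    by (simp add: set_nn_integral_affine X1_def)
  also have "\<dots> \<le> (\<integral>\<^sup>+x\<in>A. \<phi> (f x) + (ennreal (- a) * ennreal (f x) + ennreal (- b)) \<partial>\<nu>)"
    using ab f(2) ennreal_affine_le_iff
    by (intro nn_integral_mono mult_right_mono) (auto simp: affine_minorant_def)
  also have "\<dots> = (\<integral>\<^sup>+x\<in>A. \<phi> (f x) \<partial>\<nu>) + (ennreal (- a) * X1 + ennreal (- b) * emeasure \<nu> A)"
    by (subst nn_set_integral_add) (simp_all add: set_nn_integral_affine X1_def)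
  finally have ac_part: "ennreal a * X1 + ennreal b * emeasure \<nu> A
      \<le> (\<integral>\<^sup>+x\<in>A. \<phi> (f x) \<partial>\<nu>) + (ennreal (- a) * X1 + ennreal (- b) * emeasure \<nu> A)" .
  have singular_part: "ennreal a * X2 \<le> phi_inf \<phi> * X2"
    using affine_minorant_slope_le_phi_inf[OF ab] by (rule mult_right_mono) simp
  have "ennreal a * emeasure \<mu> A + ennreal b * emeasure \<nu> A
      = (ennreal a * X1 + ennreal b * emeasure \<nu> A) + ennreal a * X2"
    by (simp add: \<mu>A algebra_simps)
  also have "\<dots> \<le> (\<integral>\<^sup>+x\<in>A. \<phi> (f x) \<partial>\<nu>) + (ennreal (- a) * X1 + ennreal (- b) * emeasure \<nu> A)
      + phi_inf \<phi> * X2"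
    using ac_part singular_part by (rule add_mono)
  also have "\<dots> \<le> (\<integral>\<^sup>+x\<in>A. \<phi> (f x) \<partial>\<nu>) + phi_inf \<phi> * X2
      + (ennreal (- a) * emeasure \<mu> A + ennreal (- b) * emeasure \<nu> A)"
    by (simp add: \<mu>A algebra_simps add_increasing2)
  finally show ?thesis by (simp add: X2_def)
qed

text \<open>A Jensen-type inequality. Testing only the countably many rational minorants keeps the
  union of the exceptional null sets null.\<close>
lemma AE_entropy_le_of_affine_bounds:
  assumes \<phi>: "entropy_function \<phi>" and "finite_measure Q"
    and g[measurable]: "g \<in> borel_measurable Q" and g_nonneg: "\<And>y. 0 \<le> g y"
    and g_finite: "(\<integral>\<^sup>+y. ennreal (g y) \<partial>Q) \<noteq> \<infinity>"
    and H[measurable]: "H \<in> borel_measurable Q"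
    and bound: "\<And>a b B. affine_minorant \<phi> a b \<Longrightarrow> B \<in> sets Q \<Longrightarrow>
        ennreal a * (\<integral>\<^sup>+y\<in>B. ennreal (g y) \<partial>Q) + ennreal b * emeasure Q B
        \<le> (\<integral>\<^sup>+y\<in>B. H y \<partial>Q)
           + (ennreal (- a) * (\<integral>\<^sup>+y\<in>B. ennreal (g y) \<partial>Q) + ennreal (- b) * emeasure Q B)"
  shows "AE y in Q. \<phi> (g y) \<le> H y"
proof -
  interpret Q: finite_measure Q by fact
  have affine: "AE y in Q. ennreal (a * g y + b) \<le> H y" if ab: "affine_minorant \<phi> a b" for a b
  proof -
    have "AE y in Q. ennreal a * ennreal (g y) + ennreal b
                     \<le> H y + (ennreal (- a) * ennreal (g y) + ennreal (- b))"
    proof (rule AE_le_of_set_nn_integral_le)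
      have "(\<integral>\<^sup>+y. ennreal a * ennreal (g y) + ennreal b \<partial>Q)
          = ennreal a * (\<integral>\<^sup>+y. ennreal (g y) \<partial>Q) + ennreal b * emeasure Q (space Q)"
        by (simp add: nn_integral_add nn_integral_cmult)
      then show "(\<integral>\<^sup>+y. ennreal a * ennreal (g y) + ennreal b \<partial>Q) \<noteq> \<infinity>"
        using g_finite Q.emeasure_finite[of "space Q"] by (simp add: ennreal_mult_eq_top_iff)
    next
      fix B
      assume [measurable]: "B \<in> sets Q"
      show "(\<integral>\<^sup>+y\<in>B. ennreal a * ennreal (g y) + ennreal b \<partial>Q)
          \<le> (\<integral>\<^sup>+y\<in>B. H y + (ennreal (- a) * ennreal (g y) + ennreal (- b)) \<partial>Q)"
        using bound[OF ab, of B]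
        by (subst nn_set_integral_add) (simp_all add: set_nn_integral_affine)
    qed measurable
    then show ?thesis
      by eventually_elim (simp add: ennreal_affine_le_iff g_nonneg)
  qed
  have "AE y in Q. \<forall>q::rat \<times> rat. affine_minorant \<phi> (of_rat (fst q)) (of_rat (snd q)) \<longrightarrow>
                     ennreal (of_rat (fst q) * g y + of_rat (snd q)) \<le> H y"
    unfolding AE_all_countable by (intro allI AE_impI affine)
  then show ?thesis
    by eventually_elim (auto intro!: entropy_le_of_rat_affine_minorants[OF \<phi> g_nonneg])
qed

locale pushforward_decomposition =
  fixes \<phi> :: "real \<Rightarrow> ennreal" and \<mu> \<nu> :: "'a measure" and T :: "'a \<Rightarrow> 'b" and N :: "'b measure"
    and f :: "'a \<Rightarrow> real" and S :: "'a set" and g :: "'b \<Rightarrow> real" and S' :: "'b set"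
  assumes entropy: "entropy_function \<phi>"
    and finite_\<mu>: "finite_measure \<mu>" and finite_\<nu>: "finite_measure \<nu>"
    and sets_eq: "sets \<mu> = sets \<nu>" and T: "T \<in> measurable \<nu> N"
    and decomposition: "lebesgue_decomposition \<mu> \<nu> f S"
    and image_decomposition: "lebesgue_decomposition (distr \<mu> N T) (distr \<nu> N T) g S'"
begin

abbreviation "Q \<equiv> distr \<nu> N T"
abbreviation "P \<equiv> distr \<mu> N T"

definition null_preimage :: "'a set" where
  "null_preimage = T -` S' \<inter> space \<nu>"

definition entropy_density :: "'b \<Rightarrow> ennreal" where
  "entropy_density = RN_deriv Q (distr (density \<nu> (\<lambda>x. \<phi> (f x))) N T)"

definition singular_density :: "'b \<Rightarrow> ennreal" where
  "singular_density = RN_deriv Q (distr (density \<mu> (indicator (S - null_preimage))) N T)"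

lemma space_eq: "space \<mu> = space \<nu>"
  using sets_eq by (rule sets_eq_imp_space_eq)

lemma T_\<mu>: "T \<in> measurable \<mu> N"
  using T sets_eq by (simp cong: measurable_cong_sets)

lemma f: "f \<in> borel_measurable \<nu>" "\<And>x. 0 \<le> f x" and S: "S \<in> null_sets \<nu>"
  and f_density: "\<And>A. A \<in> sets \<mu> \<Longrightarrow> emeasure \<mu> (A - S) = (\<integral>\<^sup>+x\<in>A. ennreal (f x) \<partial>\<nu>)"
  using decomposition by (auto simp: lebesgue_decomposition_def)

lemma g: "g \<in> borel_measurable Q" "\<And>y. 0 \<le> g y" and S': "S' \<in> null_sets Q"
  and g_density: "\<And>B. B \<in> sets N \<Longrightarrow> emeasure P (B - S') = (\<integral>\<^sup>+y\<in>B. ennreal (g y) \<partial>Q)"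
  using image_decomposition by (auto simp: lebesgue_decomposition_def)

lemma finite_measure_Q: "finite_measure Q"
  using finite_measure.finite_measure_distr[OF finite_\<nu> T] .

lemma finite_measure_P: "finite_measure P"
  using finite_measure.finite_measure_distr[OF finite_\<mu> T_\<mu>] .

lemma emeasure_Q: "B \<in> sets N \<Longrightarrow> emeasure Q B = emeasure \<nu> (T -` B \<inter> space \<nu>)"
  using T by (simp add: emeasure_distr)

lemma emeasure_P: "B \<in> sets N \<Longrightarrow> emeasure P B = emeasure \<mu> (T -` B \<inter> space \<nu>)"
  using T_\<mu> by (simp add: emeasure_distr space_eq)

lemma null_preimage: "null_preimage \<in> null_sets \<nu>"
  using S' measurable_sets[OF T, of S'] by (auto simp: null_preimage_def null_sets_def emeasure_Q)

lemma measurable_decomposition_parts[measurable]: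
  "S' \<in> sets N" "S \<in> sets \<mu>" "null_preimage \<in> sets \<mu>"
  "g \<in> borel_measurable N" "(\<lambda>x. \<phi> (f x)) \<in> borel_measurable \<nu>"
  "entropy_density \<in> borel_measurable Q" "singular_density \<in> borel_measurable Q"
  using S' S null_preimage sets_eq g(1) borel_measurable_entropy_comp[OF entropy f]
    measurable_cong_sets[of Q N borel borel]
  by (auto simp: entropy_density_def singular_density_def)

lemma preimage_sets: "B \<in> sets N \<Longrightarrow> T -` B \<inter> space \<nu> \<in> sets \<mu>"
  using measurable_sets[OF T_\<mu>] by (simp add: space_eq)

lemma set_nn_integral_entropy_density:
  assumes "B \<in> sets N"
  shows "(\<integral>\<^sup>+y\<in>B. entropy_density y \<partial>Q) = (\<integral>\<^sup>+x\<in>T -` B \<inter> space \<nu>. \<phi> (f x) \<partial>\<nu>)"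
  unfolding entropy_density_def using assms preimage_sets sets_eq
  by (subst set_nn_integral_RN_deriv_distr[OF finite_\<nu> T])
     (auto simp: emeasure_density null_setsI nn_integral_null_set)

lemma set_nn_integral_singular_density:
  assumes "B \<in> sets N"
  shows "(\<integral>\<^sup>+y\<in>B. singular_density y \<partial>Q) = emeasure \<mu> (T -` B \<inter> space \<nu> \<inter> S - null_preimage)"
proof -
  define \<rho> where "\<rho> = density \<mu> (indicator (S - null_preimage))"
  have \<rho>: "emeasure \<rho> (T -` C \<inter> space \<nu>) = emeasure \<mu> (T -` C \<inter> space \<nu> \<inter> S - null_preimage)"
    if "C \<in> sets N" for C
  proof -
    have "emeasure \<rho> (T -` C \<inter> space \<nu>)
        = (\<integral>\<^sup>+x\<in>T -` C \<inter> space \<nu>. indicator (S - null_preimage) x \<partial>\<mu>)"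
      using that preimage_sets by (simp add: \<rho>_def emeasure_density)
    also have "\<dots> = (\<integral>\<^sup>+x. indicator (T -` C \<inter> space \<nu> \<inter> S - null_preimage) x \<partial>\<mu>)"
      by (intro nn_integral_cong) (simp split: split_indicator)
    also have "\<dots> = emeasure \<mu> (T -` C \<inter> space \<nu> \<inter> S - null_preimage)"
      using that preimage_sets by (intro nn_integral_indicator) auto
    finally show ?thesis .
  qed
  have "emeasure \<rho> (T -` C \<inter> space \<nu>) = 0"
    if "C \<in> sets N" "emeasure \<nu> (T -` C \<inter> space \<nu>) = 0" for C
  proof -
    have "(\<integral>\<^sup>+y\<in>C. ennreal (g y) \<partial>Q) = 0"
      using that by (intro nn_integral_null_set) (simp add: null_sets_def emeasure_Q)
    then have "emeasure \<mu> (T -` (C - S') \<inter> space \<nu>) = 0"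
      using that g_density[of C] emeasure_P[of "C - S'"] by simp
    moreover have "emeasure \<rho> (T -` C \<inter> space \<nu>) \<le> emeasure \<mu> (T -` (C - S') \<inter> space \<nu>)"
      unfolding \<rho>[OF that(1)] using that
      by (intro emeasure_mono preimage_sets) (auto simp: null_preimage_def)
    ultimately show ?thesis by simp
  qed
  moreover have "sets \<rho> = sets \<nu>" using sets_eq by (simp add: \<rho>_def)
  ultimately show ?thesis
    unfolding singular_density_def \<rho>_def[symmetric]
    using set_nn_integral_RN_deriv_distr[OF finite_\<nu> T _ _ assms] \<rho>[OF assms] by simp
qed

text \<open>On B the image measures only see mu and nu on the preimage of B - S', where
  affine_minorant_measure_le applies.\<close>
lemma affine_minorant_image_le:
  assumes ab: "affine_minorant \<phi> a b" and [measurable]: "B \<in> sets N"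
  shows "ennreal a * (\<integral>\<^sup>+y\<in>B. ennreal (g y) \<partial>Q) + ennreal b * emeasure Q B
    \<le> (\<integral>\<^sup>+y\<in>B. entropy_density y + phi_inf \<phi> * singular_density y \<partial>Q)
       + (ennreal (- a) * (\<integral>\<^sup>+y\<in>B. ennreal (g y) \<partial>Q) + ennreal (- b) * emeasure Q B)"
proof -
  note [measurable] = T
  define A where "A = T -` (B - S') \<inter> space \<nu>"
  have [measurable]: "A \<in> sets \<nu>" by (simp add: A_def)
  have g_A: "(\<integral>\<^sup>+y\<in>B. ennreal (g y) \<partial>Q) = emeasure \<mu> A"
    by (simp add: g_density[symmetric] emeasure_P A_def)
  have "A = T -` B \<inter> space \<nu> - null_preimage" by (auto simp: A_def null_preimage_def)
  then have Q_A: "emeasure Q B = emeasure \<nu> A"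
    using emeasure_Diff_null_set[OF null_preimage] by (simp add: emeasure_Q)
  have singular_A: "(\<integral>\<^sup>+y\<in>B. singular_density y \<partial>Q) = emeasure \<mu> (A \<inter> S)"
    by (simp add: set_nn_integral_singular_density)
       (auto intro!: arg_cong[where f = "emeasure \<mu>"] simp: A_def null_preimage_def)
  have entropy_A: "(\<integral>\<^sup>+x\<in>A. \<phi> (f x) \<partial>\<nu>) \<le> (\<integral>\<^sup>+y\<in>B. entropy_density y \<partial>Q)"
    by (simp add: set_nn_integral_entropy_density)
       (auto simp: A_def intro!: nn_integral_mono split: split_indicator)
  have "ennreal a * emeasure \<mu> A + ennreal b * emeasure \<nu> A
      \<le> (\<integral>\<^sup>+x\<in>A. \<phi> (f x) \<partial>\<nu>) + phi_inf \<phi> * emeasure \<mu> (A \<inter> S)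
       + (ennreal (- a) * emeasure \<mu> A + ennreal (- b) * emeasure \<nu> A)"
    by (intro affine_minorant_measure_le[OF entropy ab decomposition sets_eq]) simp
  also have "\<dots> \<le> (\<integral>\<^sup>+y\<in>B. entropy_density y \<partial>Q) + phi_inf \<phi> * (\<integral>\<^sup>+y\<in>B. singular_density y \<partial>Q)
       + (ennreal (- a) * emeasure \<mu> A + ennreal (- b) * emeasure \<nu> A)"
    using entropy_A by (simp add: singular_A)
  also have "(\<integral>\<^sup>+y\<in>B. entropy_density y \<partial>Q) + phi_inf \<phi> * (\<integral>\<^sup>+y\<in>B. singular_density y \<partial>Q)
      = (\<integral>\<^sup>+y\<in>B. entropy_density y + phi_inf \<phi> * singular_density y \<partial>Q)"
    by (subst nn_set_integral_add) (simp_all add: nn_integral_cmult mult.assoc)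
  finally show ?thesis by (simp add: g_A Q_A)
qed

lemma AE_entropy_image_density_le:
  "AE y in Q. \<phi> (g y) \<le> entropy_density y + phi_inf \<phi> * singular_density y"
proof (rule AE_entropy_le_of_affine_bounds[OF entropy finite_measure_Q g(1,2)])
  have "(\<integral>\<^sup>+y. ennreal (g y) \<partial>Q) = (\<integral>\<^sup>+y\<in>space N. ennreal (g y) \<partial>Q)"
    by (intro nn_integral_cong) simp
  also have "\<dots> = emeasure P (space N - S')"
    using g_density[of "space N"] by simp
  finally show "(\<integral>\<^sup>+y. ennreal (g y) \<partial>Q) \<noteq> \<infinity>"
    using finite_measure.emeasure_finite[OF finite_measure_P] by simp
qed (auto intro: affine_minorant_image_le)

lemma nn_integral_entropy_image_density_le:
  "(\<integral>\<^sup>+y. \<phi> (g y) \<partial>Q) \<le> (\<integral>\<^sup>+x. \<phi> (f x) \<partial>\<nu>) + phi_inf \<phi> * emeasure \<mu> (S - null_preimage)"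
proof -
  have on_space: "(\<integral>\<^sup>+y\<in>space N. h y \<partial>Q) = (\<integral>\<^sup>+y. h y \<partial>Q)" for h
    by (intro nn_integral_cong) simp
  have "T -` space N \<inter> space \<nu> = space \<nu>" using measurable_space[OF T] by auto
  moreover have "space \<nu> \<inter> S = S" using S sets.sets_into_space by auto
  moreover have "(\<integral>\<^sup>+x\<in>space \<nu>. \<phi> (f x) \<partial>\<nu>) = (\<integral>\<^sup>+x. \<phi> (f x) \<partial>\<nu>)"
    by (intro nn_integral_cong) simp
  moreover have "(\<integral>\<^sup>+y. \<phi> (g y) \<partial>Q) \<le> (\<integral>\<^sup>+y. entropy_density y + phi_inf \<phi> * singular_density y \<partial>Q)"
    using AE_entropy_image_density_le by (rule nn_integral_mono_AE)
  ultimately show ?thesis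
    using set_nn_integral_entropy_density[of "space N"] set_nn_integral_singular_density[of "space N"]
    by (simp add: on_space nn_integral_add nn_integral_cmult)
qed

lemma emeasure_P_S': "emeasure P S' = emeasure \<mu> (null_preimage \<inter> S)"
proof -
  have "emeasure P S' = emeasure \<mu> null_preimage"
    by (simp add: emeasure_P null_preimage_def)
  also have "\<dots> = emeasure \<mu> (null_preimage - S) + emeasure \<mu> (null_preimage \<inter> S)"
    by (subst plus_emeasure) (auto intro!: arg_cong[where f = "emeasure \<mu>"])
  also have "emeasure \<mu> (null_preimage - S) = 0"
    using f_density[of null_preimage] nn_integral_null_set[OF null_preimage] by simp
  finally show ?thesis by simp
qed

lemma divergence_image_le:
  "divergence \<phi> P Q \<le> (\<integral>\<^sup>+x. \<phi> (f x) \<partial>\<nu>) + phi_inf \<phi> * emeasure \<mu> S"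
proof -
  have "divergence \<phi> P Q \<le> (\<integral>\<^sup>+y. \<phi> (g y) \<partial>Q) + phi_inf \<phi> * emeasure P S'"
    using image_decomposition by (rule divergence_le_decomposition)
  also have "\<dots> \<le> (\<integral>\<^sup>+x. \<phi> (f x) \<partial>\<nu>)
      + phi_inf \<phi> * (emeasure \<mu> (S - null_preimage) + emeasure \<mu> (null_preimage \<inter> S))"
    using nn_integral_entropy_image_density_le
    by (simp add: emeasure_P_S' distrib_left add.assoc add_right_mono)
  also have "emeasure \<mu> (S - null_preimage) + emeasure \<mu> (null_preimage \<inter> S) = emeasure \<mu> S"
    by (subst plus_emeasure) (auto intro!: arg_cong[where f = "emeasure \<mu>"])
  finally show ?thesis .
qed

end

lemma divergence_distr_le:
  assumes "entropy_function \<phi>" "finite_measure \<mu>" "finite_measure \<nu>" "sets \<mu> = sets \<nu>"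
    and T: "T \<in> measurable \<nu> N"
  shows "divergence \<phi> (distr \<mu> N T) (distr \<nu> N T) \<le> divergence \<phi> \<mu> \<nu>"
proof (rule le_divergence)
  fix f S
  assume "lebesgue_decomposition \<mu> \<nu> f S"
  moreover have "T \<in> measurable \<mu> N" using T assms(4) by (simp cong: measurable_cong_sets)
  then obtain g S' where "lebesgue_decomposition (distr \<mu> N T) (distr \<nu> N T) g S'"
    using finite_measure_Lebesgue_decomposition assms finite_measure.finite_measure_distr
    by (metis sets_distr)
  ultimately interpret pushforward_decomposition \<phi> \<mu> \<nu> T N f S g S'
    using assms by (simp add: pushforward_decomposition_def)
  show "divergence \<phi> (distr \<mu> N T) (distr \<nu> N T) \<le> (\<integral>\<^sup>+x. \<phi> (f x) \<partial>\<nu>) + phi_inf \<phi> * emeasure \<mu> S"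
    by (rule divergence_image_le)
qed

lemma finite_borel_measuresD:
  assumes "\<mu> \<in> finite_borel_measures"
  shows "finite_measure \<mu>" "sets \<mu> = sets borel"
  using assms by (auto simp: finite_borel_measures_def intro: finite_measureI)

lemma divergence_proj_le:
  fixes \<mu> \<nu> :: "'a::euclidean_space measure"
  assumes "entropy_function \<phi>" "\<mu> \<in> finite_borel_measures" "\<nu> \<in> finite_borel_measures"
  shows "divergence \<phi> (proj \<theta> \<mu>) (proj \<theta> \<nu>) \<le> divergence \<phi> \<mu> \<nu>"
  unfolding proj_def
proof (rule divergence_distr_le[OF assms(1)])
  show "finite_measure \<mu>" "finite_measure \<nu>"
    using assms(2,3) by (simp_all add: finite_borel_measuresD)
  show "sets \<mu> = sets \<nu>"
    using assms(2,3) by (simp add: finite_borel_measuresD)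
  show "(\<lambda>x. \<theta> \<bullet> x) \<in> borel_measurable \<nu>"
    using finite_borel_measuresD(2)[OF assms(3)] by (simp cong: measurable_cong_sets)
qed

lemma UOT_le_OT_add_divergence:
  "UOT C \<phi>1 \<phi>2 \<mu> \<nu> \<le> OT C \<mu>' \<nu>' + (divergence \<phi>1 \<mu>' \<mu> + divergence \<phi>2 \<nu>' \<nu>)"
proof (cases "divergence \<phi>1 \<mu>' \<mu> + divergence \<phi>2 \<nu>' \<nu> = \<infinity>")
  case False
  let ?D = "divergence \<phi>1 \<mu>' \<mu> + divergence \<phi>2 \<nu>' \<nu>"
  have "UOT C \<phi>1 \<phi>2 \<mu> \<nu> - ?D \<le> (\<integral>\<^sup>+z. C z \<partial>\<pi>)"
    if "\<pi> \<in> finite_borel_measures" "distr \<pi> borel fst = \<mu>'" "distr \<pi> borel snd = \<nu>'" for \<pi>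
  proof -
    have "UOT C \<phi>1 \<phi>2 \<mu> \<nu> \<le> (\<integral>\<^sup>+z. C z \<partial>\<pi>) + ?D"
      unfolding UOT_def using that by (intro Inf_lower) (auto simp: add.assoc)
    then show ?thesis
      using False by (simp add: ennreal_minus_le_iff add.commute)
  qed
  then have "UOT C \<phi>1 \<phi>2 \<mu> \<nu> - ?D \<le> OT C \<mu>' \<nu>'"
    unfolding OT_def by (auto intro!: Inf_greatest)
  then show ?thesis
    using False by (simp add: ennreal_minus_le_iff add.commute)
next
  case True
  then show ?thesis by (subst True) simp
qed

text \<open>No measurability of F is required: the integrand of SOT is not known to be measurable.\<close>
lemma nn_integral_add_const_le:
  fixes F :: "'b \<Rightarrow> ennreal"
  shows "(\<integral>\<^sup>+x. F x + c \<partial>M) \<le> (\<integral>\<^sup>+x. F x \<partial>M) + c * emeasure M (space M)"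
proof -
  have "integral\<^sup>S M s \<le> (\<integral>\<^sup>+x. F x \<partial>M) + c * emeasure M (space M)"
    if s: "simple_function M s" "s \<le> (\<lambda>x. F x + c)" for s
  proof -
    define s' where "s' x = (if c = \<infinity> then 0 else s x - c)" for x
    have s': "simple_function M s'"
      unfolding s'_def using s(1) by (rule simple_function_compose1)
    have "s x \<le> s' x + c" for x
      by (simp add: s'_def diff_add_self_ennreal nle_le)
    then have "integral\<^sup>S M s \<le> integral\<^sup>S M (\<lambda>x. s' x + c)"
      using s s' by (intro simple_integral_mono) auto
    also have "\<dots> = integral\<^sup>N M s' + c * emeasure M (space M)"
      using s' by (simp add: simple_integral_add nn_integral_eq_simple_integral)
    also have "integral\<^sup>N M s' \<le> (\<integral>\<^sup>+x. F x \<partial>M)"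
      using s(2) by (intro nn_integral_mono) (auto simp: s'_def le_fun_def ennreal_minus_le_iff add.commute)
    finally show ?thesis by (simp add: add_right_mono)
  qed
  then show ?thesis
    unfolding nn_integral_def by (auto intro!: SUP_least)
qed

lemma emeasure_unif_sphere_le_1:
  "emeasure (unif_sphere :: 'a::euclidean_space measure) (space unif_sphere) \<le> 1"
proof -
  have "emeasure (unif_sphere :: 'a measure) (space unif_sphere)
      = emeasure lborel (ball (0::'a) 1) / emeasure lborel (ball (0::'a) 1)"
    by (simp add: unif_sphere_def emeasure_distr)
  also have "\<dots> \<le> 1"
    by (cases "emeasure lborel (ball (0::'a) 1) = 0")
       (auto intro!: divide_le_posI_ennreal simp: zero_less_iff_neq_zero)
  finally show ?thesis .
qed

theorem theorem6:
  fixes X :: "'a::euclidean_space set" and R :: real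
    and \<alpha> \<beta> :: "'a measure"
    and C1 :: "real \<times> real \<Rightarrow> ennreal" and \<phi>1 \<phi>2 :: "real \<Rightarrow> ennreal"
  assumes "entropy_function \<phi>1" and "entropy_function \<phi>2"
    and "\<forall>c. closed {z. C1 z \<le> c}"
    and "compact X" and "X \<subseteq> cball 0 R"
    and "\<alpha> \<in> finite_borel_measures" and "emeasure \<alpha> (UNIV - X) = 0"
    and "\<beta> \<in> finite_borel_measures" and "emeasure \<beta> (UNIV - X) = 0"
  shows "SUOT C1 \<phi>1 \<phi>2 \<alpha> \<beta> \<le> USOT C1 \<phi>1 \<phi>2 \<alpha> \<beta>"
  unfolding USOT_def
proof (rule Inf_greatest, clarify)
  fix \<pi>1 \<pi>2 :: "'a measure"
  assume \<pi>: "\<pi>1 \<in> finite_borel_measures" "\<pi>2 \<in> finite_borel_measures"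
  let ?D = "divergence \<phi>1 \<pi>1 \<alpha> + divergence \<phi>2 \<pi>2 \<beta>"
  have "divergence \<phi>1 (proj \<theta> \<pi>1) (proj \<theta> \<alpha>) + divergence \<phi>2 (proj \<theta> \<pi>2) (proj \<theta> \<beta>) \<le> ?D"
    for \<theta> :: 'a
    using assms \<pi> by (intro add_mono divergence_proj_le) auto
  then have "SUOT C1 \<phi>1 \<phi>2 \<alpha> \<beta> \<le> (\<integral>\<^sup>+\<theta>. OT C1 (proj \<theta> \<pi>1) (proj \<theta> \<pi>2) + ?D \<partial>unif_sphere)"
    unfolding SUOT_def by (intro nn_integral_mono order_trans[OF UOT_le_OT_add_divergence add_left_mono])
  also have "\<dots> \<le> SOT C1 \<pi>1 \<pi>2 + ?D * emeasure (unif_sphere :: 'a measure) (space unif_sphere)"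
    unfolding SOT_def by (rule nn_integral_add_const_le)
  also have "\<dots> \<le> SOT C1 \<pi>1 \<pi>2 + ?D"
    using mult_left_mono[OF emeasure_unif_sphere_le_1, of ?D] by (intro add_left_mono) simp
  finally show "SUOT C1 \<phi>1 \<phi>2 \<alpha> \<beta> \<le> SOT C1 \<pi>1 \<pi>2 + divergence \<phi>1 \<pi>1 \<alpha> + divergence \<phi>2 \<pi>2 \<beta>"
    by (simp add: add.assoc)
qed

end
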